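(* On the word-RAM model, the explicit-output task of converting a quadratic-form description of an $n$-qubit stabilizer state into its full $2^n$-entry amplitude vector can be solved in time $\Theta(2^n)$ (an $O(2^n)$-time algorithm exists, and $\Omega(2^n)$ time is necessary since the output has length $2^n$).
   Context: A quadratic-form description consists of $0\le k\le n$, $h\in\mathbb F_2^n$, linearly independent $v_1,\dots,v_k\in\mathbb F_2^n$, $d\in\mathbb F_2^k$, an upper-triangular $J\in\mathbb F_2^{k\times k}$, and a nonzero $\gamma\in\mathbb C$; it specifies the vector $(\psi_x)_{x\in\mathbb F_2^n}$ with $\psi_{h\oplus\sum_t y_tv_t}=\gamma\,\mathrm i^{d^\top y}(-1)^{y^\top Jy}$ for all $y\in\mathbb F_2^k$ (bits as integers, ordinary integer products) and $\psi_x=0$ off the affine space $h+\operatorname{span}\{v_1,\dots,v_k\}$. Word-RAM model: words of $\Theta(n)$ bits; XOR, AND, shifts, comparisons, addition mod 4, array lookup with one-word indices, and writing one complex amplitude are unit cost. *)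

theory Defs
  imports Complex_Main
begin

text \<open>Vectors of F_2^m are encoded as natural numbers below 2^m: bit j of the
  number is coordinate j.  A description consists of n, k, h, v (v t is v_t for
  t < k), d, J (J s is row s of the k x k matrix, bit t of J s is J_{s,t})
  and gamma.\<close>

fun span_comb :: "(nat \<Rightarrow> nat) \<Rightarrow> nat \<Rightarrow> nat \<Rightarrow> nat" where
  "span_comb v y 0 = 0"
| "span_comb v y (Suc t) =
     (if bit y t then Bit_Operations.xor (span_comb v y t) (v t) else span_comb v y t)"

definition valid_desc ::
  "nat \<Rightarrow> nat \<Rightarrow> nat \<Rightarrow> (nat \<Rightarrow> nat) \<Rightarrow> nat \<Rightarrow> (nat \<Rightarrow> nat) \<Rightarrow> complex \<Rightarrow> bool" where
  "valid_desc n k h v d J \<gamma> \<longleftrightarrow>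
     k \<le> n \<and> h < 2 ^ n \<and> (\<forall>t<k. v t < 2 ^ n) \<and> d < 2 ^ k \<and> (\<forall>s<k. J s < 2 ^ k)
     \<and> (\<forall>y < 2 ^ k. y \<noteq> 0 \<longrightarrow> span_comb v y k \<noteq> 0)  \<comment> \<open>linear independence\<close>
     \<and> (\<forall>s<k. \<forall>t<k. bit (J s) t \<longrightarrow> s \<le> t)  \<comment> \<open>J upper triangular\<close>
     \<and> \<gamma> \<noteq> 0"

text \<open>Phase i^(d^T y) (-1)^(y^T J y) with ordinary integer products.\<close>
definition qf_phase :: "nat \<Rightarrow> nat \<Rightarrow> (nat \<Rightarrow> nat) \<Rightarrow> nat \<Rightarrow> complex" where
  "qf_phase k d J y =
     \<i> ^ card {t. t < k \<and> bit d t \<and> bit y t}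
     * (-1) ^ card {(s, t). s < k \<and> t < k \<and> bit y s \<and> bit (J s) t \<and> bit y t}"

definition qf_state ::
  "nat \<Rightarrow> nat \<Rightarrow> (nat \<Rightarrow> nat) \<Rightarrow> nat \<Rightarrow> (nat \<Rightarrow> nat) \<Rightarrow> complex \<Rightarrow> nat \<Rightarrow> complex" where
  "qf_state k h v d J \<gamma> x =
     (if \<exists>y < 2 ^ k. x = Bit_Operations.xor h (span_comb v y k)
      then \<gamma> * qf_phase k d J (THE y. y < 2 ^ k \<and> x = Bit_Operations.xor h (span_comb v y k))
      else 0)"

text \<open>Registers and memory cells hold words, i.e. naturals below 2^w (w = word
  size). Every executed instruction costs one time unit.\<close>

datatype instr =
    LoadI nat nat
  | Mov nat nat
  | XorI nat nat nat
  | AndI nat nat nat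
  | OrI nat nat nat
  | Shl nat nat nat
  | Shr nat nat nat
  | Add nat nat nat
  | Sub nat nat nat
  | Less nat nat nat
  | Eq nat nat nat
  | Load nat nat
  | Store nat nat
  | Jz nat nat
  | Jmp nat
  | WriteAmp nat nat
  | WriteZero nat

record rstate =
  pc :: nat
  regs :: "nat \<Rightarrow> nat"
  mem :: "nat \<Rightarrow> nat"
  out :: "nat \<Rightarrow> complex option"

definition halted :: "instr list \<Rightarrow> rstate \<Rightarrow> bool" where
  "halted P s \<longleftrightarrow> length P \<le> pc s"

fun exec_instr :: "nat \<Rightarrow> complex \<Rightarrow> instr \<Rightarrow> rstate \<Rightarrow> rstate" where
  "exec_instr w g (LoadI r c) s = s\<lparr>pc := Suc (pc s), regs := (regs s)(r := c mod 2 ^ w)\<rparr>"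
| "exec_instr w g (Mov r a) s = s\<lparr>pc := Suc (pc s), regs := (regs s)(r := regs s a)\<rparr>"
| "exec_instr w g (XorI r a b) s = s\<lparr>pc := Suc (pc s),
     regs := (regs s)(r := Bit_Operations.xor (regs s a) (regs s b))\<rparr>"
| "exec_instr w g (AndI r a b) s = s\<lparr>pc := Suc (pc s),
     regs := (regs s)(r := Bit_Operations.and (regs s a) (regs s b))\<rparr>"
| "exec_instr w g (OrI r a b) s = s\<lparr>pc := Suc (pc s),
     regs := (regs s)(r := Bit_Operations.or (regs s a) (regs s b))\<rparr>"
| "exec_instr w g (Shl r a b) s = s\<lparr>pc := Suc (pc s),
     regs := (regs s)(r := (regs s a * 2 ^ regs s b) mod 2 ^ w)\<rparr>"
| "exec_instr w g (Shr r a b) s = s\<lparr>pc := Suc (pc s),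
     regs := (regs s)(r := regs s a div 2 ^ regs s b)\<rparr>"
| "exec_instr w g (Add r a b) s = s\<lparr>pc := Suc (pc s),
     regs := (regs s)(r := (regs s a + regs s b) mod 2 ^ w)\<rparr>"
| "exec_instr w g (Sub r a b) s = s\<lparr>pc := Suc (pc s),
     regs := (regs s)(r := (regs s a + 2 ^ w - regs s b) mod 2 ^ w)\<rparr>"
| "exec_instr w g (Less r a b) s = s\<lparr>pc := Suc (pc s),
     regs := (regs s)(r := (if regs s a < regs s b then 1 else 0))\<rparr>"
| "exec_instr w g (Eq r a b) s = s\<lparr>pc := Suc (pc s),
     regs := (regs s)(r := (if regs s a = regs s b then 1 else 0))\<rparr>"
| "exec_instr w g (Load r a) s = s\<lparr>pc := Suc (pc s), regs := (regs s)(r := mem s (regs s a))\<rparr>"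
| "exec_instr w g (Store a b) s = s\<lparr>pc := Suc (pc s), mem := (mem s)(regs s a := regs s b)\<rparr>"
| "exec_instr w g (Jz r t) s = s\<lparr>pc := (if regs s r = 0 then t else Suc (pc s))\<rparr>"
| "exec_instr w g (Jmp t) s = s\<lparr>pc := t\<rparr>"
| "exec_instr w g (WriteAmp a b) s = s\<lparr>pc := Suc (pc s),
     out := (out s)(regs s a := Some (g * \<i> ^ (regs s b mod 4)))\<rparr>"
| "exec_instr w g (WriteZero a) s = s\<lparr>pc := Suc (pc s), out := (out s)(regs s a := Some 0)\<rparr>"

definition step :: "instr list \<Rightarrow> nat \<Rightarrow> complex \<Rightarrow> rstate \<Rightarrow> rstate" where
  "step P w g s = (if halted P s then s else exec_instr w g (P ! pc s) s)"

definition run :: "instr list \<Rightarrow> nat \<Rightarrow> complex \<Rightarrow> nat \<Rightarrow> rstate \<Rightarrow> rstate" where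
  "run P w g t s = (step P w g ^^ t) s"

text \<open>Input layout: mem[0] = n, mem[1] = k, mem[2] = h, mem[3] = d,
  mem[4 + t] = v_t and mem[4 + k + t] = row t of J (t < k); all other cells,
  all registers and pc are 0; no output entry written. gamma is available
  to the unit-cost amplitude-write instruction.\<close>
definition input_mem :: "nat \<Rightarrow> nat \<Rightarrow> nat \<Rightarrow> (nat \<Rightarrow> nat) \<Rightarrow> nat \<Rightarrow> (nat \<Rightarrow> nat) \<Rightarrow> nat \<Rightarrow> nat" where
  "input_mem n k h v d J a =
     (if a = 0 then n else if a = 1 then k else if a = 2 then h else if a = 3 then d
      else if a < 4 + k then v (a - 4)
      else if a < 4 + 2 * k then J (a - 4 - k) else 0)"

definition init_state :: "nat \<Rightarrow> nat \<Rightarrow> nat \<Rightarrow> (nat \<Rightarrow> nat) \<Rightarrow> nat \<Rightarrow> (nat \<Rightarrow> nat) \<Rightarrow> rstate" where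
  "init_state n k h v d J =
     \<lparr>pc = 0, regs = (\<lambda>_. 0), mem = input_mem n k h v d J, out = (\<lambda>_. None)\<rparr>"

definition output_is :: "nat \<Rightarrow> (nat \<Rightarrow> complex) \<Rightarrow> (nat \<Rightarrow> complex option) \<Rightarrow> bool" where
  "output_is n \<psi> o' \<longleftrightarrow> (\<forall>x. o' x = (if x < 2 ^ n then Some (\<psi> x) else None))"

end

theory Submission
  imports Defs
begin

text \<open>Upper bound: the program first writes 0 to all 2^n output cells. It then tabulates, for
  every y < 2^k, the point x(y) = h XOR (sum of y_t v_t) and the exponent e(y) mod 4 with
  \<open>qf_phase k d J y = i^e(y)\<close>, and finally overwrites cell x(y) by \<open>\<gamma> i^e(y)\<close>.  The tables are
  filled by doubling: for t = k-1 down to 0 and every multiple y of 2^(t+1), the entry at y + 2^t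
  is obtained from the one at y by x(y + 2^t) = x(y) XOR v_t and
  e(y + 2^t) = e(y) + d_t + 2 popcount(J_t AND (y + 2^t)); upper triangularity of J is what makes
  row t the only new contribution to \<open>y\<^sup>T J y\<close>, because y has no bits below t.  The parities of
  popcounts are themselves tabulated for all arguments below 2^k, by
  popcount z = popcount (z div 2) + z mod 2.  Every table entry costs O(1) steps, so the running
  time is O(2^n + 2^k) = O(2^n).

  Lower bound: each instruction writes at most one output cell, and 2^n cells must be written.\<close>

lemma less_power_iff_no_high_bits: "(z::nat) < 2 ^ n \<longleftrightarrow> (\<forall>u\<ge>n. \<not> bit z u)"
  by (metis bit_take_bit_iff not_le take_bit_nat_eq_self_iff bit_eq_iff)

lemma xor_less_power: "(a::nat) < 2 ^ n \<Longrightarrow> b < 2 ^ n \<Longrightarrow> Bit_Operations.xor a b < 2 ^ n"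
  by (simp add: less_power_iff_no_high_bits bit_xor_iff)

lemma and_less_power: "(a::nat) < 2 ^ n \<Longrightarrow> Bit_Operations.and a b < 2 ^ n"
  by (simp add: less_power_iff_no_high_bits bit_and_iff)

lemma bit_imp_less: "bit (z::nat) u \<Longrightarrow> u < z"
  by (metis bit_take_bit_iff less_exp take_bit_nat_eq_self_iff order.strict_trans)

lemma bit_add_power: "\<not> bit (y::nat) t \<Longrightarrow> bit (y + 2 ^ t) i \<longleftrightarrow> bit y i \<or> i = t"
proof -
  assume "\<not> bit y t"
  then have "y + 2 ^ t = Bit_Operations.or y (2 ^ t)"
    by (intro disjunctive_add) (auto simp: bit_exp_iff)
  then show ?thesis by (auto simp: bit_or_iff bit_exp_iff)
qed

lemma bit_gt_of_power_dvd: "2 ^ Suc t dvd (y::nat) \<Longrightarrow> bit y s \<Longrightarrow> t < s"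
proof -
  assume "2 ^ Suc t dvd y" "bit y s"
  then obtain q where "y = q * 2 ^ Suc t" by (metis dvd_def mult.commute)
  then have "y = push_bit (Suc t) q" by (simp only: push_bit_eq_mult)
  with \<open>bit y s\<close> have "bit (push_bit (Suc t) q) s" by simp
  then show ?thesis unfolding bit_push_bit_iff by auto
qed

lemma and_3_eq_mod_4: "Bit_Operations.and (x::nat) 3 = x mod 4"
proof -
  have "mask 2 = (3::nat)" by (simp add: mask_eq_exp_minus_1)
  then have "Bit_Operations.and x 3 = take_bit 2 x" by (metis take_bit_eq_mask)
  then show ?thesis by (simp add: take_bit_eq_mod)
qed

lemma odd_multiple_of_power_less:
  fixes a :: nat
  assumes "2 ^ t dvd a" "\<not> 2 ^ Suc t dvd a" "a < Suc j * 2 ^ Suc t" "a \<noteq> j * 2 ^ Suc t + 2 ^ t"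
  shows "a < j * 2 ^ Suc t"
proof -
  obtain q where q: "a = q * 2 ^ t" using assms(1) by (metis dvd_def mult.commute)
  have "odd q"
  proof
    assume "even q"
    then obtain r where "q = 2 * r" by auto
    then have "a = r * 2 ^ Suc t" using q by simp
    then show False using assms(2) by simp
  qed
  have "q * 2 ^ t < (2 * j + 2) * 2 ^ t" using assms(3) q by (simp add: algebra_simps)
  then have "q < 2 * j + 2" by (simp only: mult_less_cancel2)
  moreover have "q \<noteq> 2 * j + 1" using assms(4) q by (auto simp: algebra_simps)
  ultimately have "q < 2 * j" using \<open>odd q\<close> by presburger
  then show ?thesis using q by simp
qed

lemma mod_4_add_double: "((a::nat) + b + 2 * c) mod 4 = (a mod 4 + b + 2 * (c mod 2)) mod 4"
proof -
  have "(2 * c) mod 4 = 2 * (c mod 2)" using mod_mult_mult1[of 2 c 2] by simp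
  then have "(a + b + 2 * c) mod 4 = (a + b + 2 * (c mod 2)) mod 4"
    by (metis mod_add_right_eq)
  then show ?thesis by (metis add.assoc mod_add_left_eq)
qed

definition popcount :: "nat \<Rightarrow> nat" where
  "popcount z = card {u. bit z u}"

lemma finite_bits_nat: "finite {u. bit (z::nat) u}"
  by (rule finite_subset[of _ "{..<z}"]) (auto dest: bit_imp_less)

lemma popcount_0 [simp]: "popcount 0 = 0"
  by (simp add: popcount_def)

lemma popcount_half: "popcount z = popcount (z div 2) + z mod 2"
proof -
  have "{u. bit z u} = (if odd z then {0} else {}) \<union> Suc ` {u. bit (z div 2) u}"
  proof (intro set_eqI iffI)
    fix x assume "x \<in> {u. bit z u}"
    then show "x \<in> (if odd z then {0} else {}) \<union> Suc ` {u. bit (z div 2) u}"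
      by (cases x) (auto simp: bit_Suc bit_0)
  qed (auto simp: bit_Suc bit_0 split: if_splits)
  moreover have "card (Suc ` {u. bit (z div 2) u}) = popcount (z div 2)"
    unfolding popcount_def by (simp add: card_image)
  ultimately show ?thesis unfolding popcount_def using finite_bits_nat
    by (auto simp: odd_iff_mod_2_eq_one card_insert_if)
qed

lemma xor_mod_2: "Bit_Operations.xor ((a::nat) mod 2) (b mod 2) = (a + b) mod 2"
  by (cases "even a"; cases "even b")
    (auto simp: odd_iff_mod_2_eq_one even_iff_mod_2_eq_zero, presburger)

lemma popcount_parity_half:
  "popcount z mod 2 = Bit_Operations.xor (popcount (z div 2) mod 2) (z mod 2)"
  by (simp add: xor_mod_2 popcount_half[of z] mod_add_right_eq)

lemma xor_left_self_nat: "Bit_Operations.xor (a::nat) (Bit_Operations.xor a b) = b"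
  by (simp flip: xor.assoc)

lemma span_comb_0 [simp]: "span_comb v 0 m = 0"
  by (induction m) auto

lemma span_comb_cong: "(\<And>i. i < m \<Longrightarrow> bit a i = bit b i) \<Longrightarrow> span_comb v a m = span_comb v b m"
  by (induction m) auto

lemma span_comb_add_power:
  "t < m \<Longrightarrow> \<not> bit y t \<Longrightarrow> span_comb v (y + 2 ^ t) m = Bit_Operations.xor (span_comb v y m) (v t)"
proof (induction m)
  case 0
  then show ?case by simp
next
  case (Suc m)
  show ?case
  proof (cases "m = t")
    case True
    have "span_comb v (y + 2 ^ t) m = span_comb v y m"
      using True Suc.prems by (intro span_comb_cong) (auto simp: bit_add_power)
    then show ?thesis using True Suc.prems by (simp add: bit_add_power)
  next
    case False
    then have "t < m" using Suc.prems by simp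
    then show ?thesis using Suc False by (auto simp: bit_add_power ac_simps)
  qed
qed

lemma span_comb_xor:
  "span_comb v (Bit_Operations.xor a b) m = Bit_Operations.xor (span_comb v a m) (span_comb v b m)"
  by (induction m) (auto simp: bit_xor_iff xor_left_self_nat ac_simps)

lemma span_comb_less_power: "(\<And>t. t < m \<Longrightarrow> v t < 2 ^ n) \<Longrightarrow> span_comb v y m < 2 ^ n"
  by (induction m) (auto intro: xor_less_power)

lemma span_comb_inj:
  assumes indep: "\<forall>y < 2 ^ k. y \<noteq> 0 \<longrightarrow> span_comb v y k \<noteq> 0"
    and "y1 < 2 ^ k" "y2 < 2 ^ k" "span_comb v y1 k = span_comb v y2 k"
  shows "y1 = y2"
proof -
  have "span_comb v (Bit_Operations.xor y1 y2) k = 0" using assms(4) by (simp add: span_comb_xor)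
  moreover have "Bit_Operations.xor y1 y2 < 2 ^ k" using assms(2,3) by (rule xor_less_power)
  ultimately have "Bit_Operations.xor y1 y2 = 0" using indep by blast
  then show ?thesis using xor_left_self_nat[of y1 y2] by simp
qed

section \<open>The phase exponent\<close>

definition phase_exponent :: "nat \<Rightarrow> nat \<Rightarrow> (nat \<Rightarrow> nat) \<Rightarrow> nat \<Rightarrow> nat" where
  "phase_exponent k d J y = card {t. t < k \<and> bit d t \<and> bit y t}
     + 2 * card {(s, t). s < k \<and> t < k \<and> bit y s \<and> bit (J s) t \<and> bit y t}"

lemma qf_phase_eq_i_power: "qf_phase k d J y = \<i> ^ phase_exponent k d J y"
proof -
  have "(-1::complex) = \<i> ^ 2" by simp
  then show ?thesis unfolding qf_phase_def phase_exponent_def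
    by (simp only: power_add power_mult)
qed

lemma i_power_mod_4: "\<i> ^ (e mod 4) = \<i> ^ e"
proof -
  have "\<i> ^ e = \<i> ^ (4 * (e div 4) + e mod 4)" by simp
  also have "\<dots> = \<i> ^ (e mod 4)" by (simp only: power_add power_mult) simp
  finally show ?thesis by simp
qed

lemma phase_exponent_0 [simp]: "phase_exponent k d J 0 = 0"
  by (simp add: phase_exponent_def)

lemma card_linear_term_add_power:
  fixes y :: nat
  assumes "t < k" "\<not> bit y t"
  shows "card {u. u < k \<and> bit d u \<and> bit (y + 2 ^ t) u}
    = card {u. u < k \<and> bit d u \<and> bit y u} + (if bit d t then 1 else 0)"
proof -
  have "{u. u < k \<and> bit d u \<and> bit (y + 2 ^ t) u} =
      (if bit d t then insert t {u. u < k \<and> bit d u \<and> bit y u} else {u. u < k \<and> bit d u \<and> bit y u})"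
    using assms by (auto simp: bit_add_power)
  then show ?thesis using assms(2) by (simp add: card_insert_if)
qed

lemma card_quadratic_term_add_power:
  assumes upper: "\<forall>s<k. \<forall>u<k. bit (J s) u \<longrightarrow> s \<le> u" and row: "J t < 2 ^ k"
    and "t < k" and dvd: "2 ^ Suc t dvd y"
  shows "card {(s, u). s < k \<and> u < k \<and> bit (y + 2 ^ t) s \<and> bit (J s) u \<and> bit (y + 2 ^ t) u}
    = card {(s, u). s < k \<and> u < k \<and> bit y s \<and> bit (J s) u \<and> bit y u}
      + popcount (Bit_Operations.and (J t) (y + 2 ^ t))"
    (is "card (?Q (y + 2 ^ t)) = card (?Q y) + _")
proof -
  have bits: "\<And>i. bit (y + 2 ^ t) i \<longleftrightarrow> bit y i \<or> i = t"
    using dvd by (intro bit_add_power) (blast dest: bit_gt_of_power_dvd)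
  let ?R = "{(s, u). s = t \<and> u < k \<and> bit (J t) u \<and> bit (y + 2 ^ t) u}"
  have "?Q (y + 2 ^ t) = ?Q y \<union> ?R"
  proof (intro set_eqI iffI)
    fix p assume "p \<in> ?Q (y + 2 ^ t)"
    then obtain s u where p: "p = (s, u)" "s < k" "u < k" "bit (y + 2 ^ t) s" "bit (J s) u"
      "bit (y + 2 ^ t) u" by auto
    show "p \<in> ?Q y \<union> ?R"
    proof (cases "s = t")
      case False
      then have "t < s" using p bits dvd bit_gt_of_power_dvd by blast
      then have "t < u" using upper p by force
      then show ?thesis using p bits False by auto
    qed (use p in auto)
  qed (use \<open>t < k\<close> in \<open>auto simp: bits\<close>)
  moreover have "?Q y \<inter> ?R = {}"
    using dvd bit_gt_of_power_dvd by blast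
  moreover have "finite (?Q y)" "finite ?R"
    by (rule finite_subset[of _ "{..<k} \<times> {..<k}"], use \<open>t < k\<close> in auto)+
  moreover have "?R = (\<lambda>u. (t, u)) ` {u. bit (Bit_Operations.and (J t) (y + 2 ^ t)) u}"
  proof -
    have "\<And>u. bit (J t) u \<Longrightarrow> u < k" using row less_power_iff_no_high_bits not_le by blast
    then show ?thesis by (auto simp: bit_and_iff)
  qed
  then have "card ?R = popcount (Bit_Operations.and (J t) (y + 2 ^ t))"
    unfolding popcount_def by (simp add: card_image inj_on_def)
  ultimately show ?thesis by (simp add: card_Un_disjoint)
qed

lemma phase_exponent_add_power:
  assumes "\<forall>s<k. \<forall>u<k. bit (J s) u \<longrightarrow> s \<le> u" "J t < 2 ^ k" "t < k" "2 ^ Suc t dvd y"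
  shows "phase_exponent k d J (y + 2 ^ t) = phase_exponent k d J y + (if bit d t then 1 else 0)
     + 2 * popcount (Bit_Operations.and (J t) (y + 2 ^ t))"
  using card_linear_term_add_power[of t k y d] card_quadratic_term_add_power[OF assms]
    assms(3,4) bit_gt_of_power_dvd
  unfolding phase_exponent_def by fastforce

section \<open>Lower bound\<close>

definition written :: "rstate \<Rightarrow> nat set" where
  "written s = {x. out s x \<noteq> None}"

lemma written_step: "\<exists>a. written (step P w g s) \<subseteq> insert a (written s)"
proof (cases "halted P s")
  case True
  then show ?thesis by (auto simp: step_def)
next
  case False
  then show ?thesis unfolding step_def written_def by (cases "P ! pc s") auto
qed

lemma card_written_run:
  "finite (written s) \<Longrightarrow>
    finite (written (run P w g t s)) \<and> card (written (run P w g t s)) \<le> card (written s) + t"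
proof (induction t)
  case 0
  then show ?case by (simp add: run_def)
next
  case (Suc t)
  let ?A = "written (run P w g t s)"
  obtain a where a: "written (run P w g (Suc t) s) \<subseteq> insert a ?A"
    using written_step[of P w g "run P w g t s"] by (auto simp: run_def)
  have fin: "finite (insert a ?A)" using Suc by simp
  have "card (written (run P w g (Suc t) s)) \<le> card (insert a ?A)"
    using a fin by (rule card_mono[rotated])
  also have "\<dots> \<le> Suc (card ?A)" by (rule card_insert_le_m1) (auto simp: card_insert_if Suc fin)
  finally show ?case using Suc a fin by (auto intro: finite_subset)
qed

lemma output_time_lower_bound:
  assumes "output_is n \<psi> (out (run P w g t (init_state n k h v d J)))"
  shows "2 ^ n \<le> t"
proof -
  have "written (run P w g t (init_state n k h v d J)) = {..<2 ^ n}"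
    using assms unfolding output_is_def written_def by auto
  moreover have "card (written (run P w g t (init_state n k h v d J))) \<le> t"
    using card_written_run[of "init_state n k h v d J" P w g t]
    by (simp add: init_state_def written_def)
  ultimately show ?thesis by simp
qed

definition reaches_within ::
  "instr list \<Rightarrow> nat \<Rightarrow> complex \<Rightarrow> rstate \<Rightarrow> (rstate \<Rightarrow> bool) \<Rightarrow> nat \<Rightarrow> bool" where
  "reaches_within P w g s Q b \<longleftrightarrow> (\<exists>t\<le>b. Q (run P w g t s))"

lemma run_0 [simp]: "run P w g 0 s = s"
  by (simp add: run_def)

lemma run_Suc: "run P w g (Suc t) s = run P w g t (step P w g s)"
  by (simp only: run_def funpow_Suc_right comp_def)

lemma run_numeral: "run P w g (numeral m) s = run P w g (pred_numeral m) (step P w g s)"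
  by (simp add: numeral_eq_Suc run_Suc)

lemma run_add: "run P w g (t1 + t2) s = run P w g t2 (run P w g t1 s)"
  by (simp only: run_def add.commute[of t1] funpow_add comp_def)

lemma step_eq: "pc s < length P \<Longrightarrow> step P w g s = exec_instr w g (P ! pc s) s"
  by (simp add: step_def halted_def)

lemma reaches_within_run: "Q (run P w g t s) \<Longrightarrow> t \<le> b \<Longrightarrow> reaches_within P w g s Q b"
  unfolding reaches_within_def by blast

lemma reaches_within_mono: "reaches_within P w g s Q b \<Longrightarrow> b \<le> b' \<Longrightarrow> reaches_within P w g s Q b'"
  unfolding reaches_within_def by (meson order.trans)

lemma reaches_within_trans:
  "reaches_within P w g s Q b1 \<Longrightarrow> (\<And>s'. Q s' \<Longrightarrow> reaches_within P w g s' R b2) \<Longrightarrow>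
    reaches_within P w g s R (b1 + b2)"
  unfolding reaches_within_def by (metis add_mono run_add)

lemma reaches_within_loop:
  assumes body: "\<And>i s. I i s \<Longrightarrow> i < m \<Longrightarrow> reaches_within P w g s (I (Suc i)) (f i)"
    and exit: "\<And>s. I m s \<Longrightarrow> reaches_within P w g s Q c"
  shows "I i s \<Longrightarrow> i \<le> m \<Longrightarrow> reaches_within P w g s Q ((\<Sum>j\<in>{i..<m}. f j) + c)"
proof (induction "m - i" arbitrary: i s)
  case 0
  then have "i = m" by simp
  then show ?case using exit 0 by simp
next
  case (Suc x)
  then have im: "i < m" by simp
  have "reaches_within P w g s Q (f i + ((\<Sum>j\<in>{Suc i..<m}. f j) + c))"
    by (rule reaches_within_trans[OF body[OF Suc.prems(1) im]]) (use Suc im in auto)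
  moreover have "(\<Sum>j\<in>{i..<m}. f j) = f i + (\<Sum>j\<in>{Suc i..<m}. f j)"
    using im by (simp add: sum.atLeast_Suc_lessThan)
  ultimately show ?case by (simp add: add.assoc)
qed

lemma reaches_within_loop_const:
  assumes "\<And>i s. I i s \<Longrightarrow> i < m \<Longrightarrow> reaches_within P w g s (I (Suc i)) a"
    and "\<And>s. I m s \<Longrightarrow> reaches_within P w g s Q c"
  shows "I 0 s \<Longrightarrow> reaches_within P w g s Q (a * m + c)"
  using reaches_within_loop[of I m P w g "\<lambda>_. a" Q c 0 s] assms by (simp add: mult.commute)

text \<open>Registers 0--12 hold constants once set up (see \<open>fixed_regs\<close>) and register 13 is the
  loop counter.  Besides the input, which occupies the cells below 4 + 2k, the memory holds three
  tables indexed by y < 2^k: the parity of popcount y at 4 + 2k + y, the point x(y) at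
  4 + 2k + 2^k + y, and e(y) mod 4 at 4 + 2k + 2 2^k + y.  Jump targets are absolute.\<close>

definition prog :: "instr list" where
  "prog = [
    \<comment> \<open>pc 0--15: load the constants\<close>
    LoadI 1 1, Load 2 0, Load 3 1, LoadI 13 2, Load 9 13, LoadI 13 3, Load 10 13,
    LoadI 11 3, LoadI 12 4, Shl 4 1 2, Shl 5 1 3, Add 6 3 3, Add 6 6 12, Add 7 6 5, Add 8 7 5,
    LoadI 13 0,
    \<comment> \<open>pc 16--20: write 0 to every output cell\<close>
    Less 14 13 4, Jz 14 21, WriteZero 13, Add 13 13 1, Jmp 16,
    \<comment> \<open>pc 21--32: parity table\<close>
    LoadI 13 1, Less 14 13 5, Jz 14 33, Shr 15 13 1, Add 15 15 6, Load 15 15, AndI 16 13 1,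
    XorI 15 15 16, Add 16 6 13, Store 16 15, Add 13 13 1, Jmp 22,
    \<comment> \<open>pc 33--47: entries for y = 0, outer loop over t = k - 1, ..., 0\<close>
    Store 7 9, Store 8 0, Mov 13 3, Jz 13 69, Sub 13 13 1, Shl 14 1 13, Add 15 14 14,
    Add 16 13 12, Load 16 16, Add 17 13 12, Add 17 17 3, Load 17 17, Shr 18 10 13, AndI 18 18 1,
    Mov 19 0,
    \<comment> \<open>pc 48--68: inner loop over the multiples y of 2^(t+1), filling the entries at y + 2^t\<close>
    Less 20 19 5, Jz 20 36, Add 21 19 14, Add 22 7 19, Load 22 22, XorI 22 22 16, Add 23 7 21,
    Store 23 22, Add 22 8 19, Load 22 22, Add 22 22 18, AndI 23 17 21, Add 23 23 6, Load 23 23,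
    Add 23 23 23, Add 22 22 23, AndI 22 22 11, Add 23 8 21, Store 23 22, Add 19 19 15, Jmp 48,
    \<comment> \<open>pc 69--78: write the amplitudes\<close>
    LoadI 13 0, Less 14 13 5, Jz 14 79, Add 15 7 13, Load 15 15, Add 16 8 13, Load 16 16,
    WriteAmp 15 16, Add 13 13 1, Jmp 70]"

lemma length_prog [simp]: "length prog = 79"
  by (simp add: prog_def)

section \<open>Correctness of the program\<close>

lemma double_add_4_le_4_power: "2 * k + 4 \<le> 4 * (2::nat) ^ k"
  by (induction k) simp_all

lemma outer_costs_le: "(\<Sum>i<m. (12::nat) + (21 * 2 ^ i + 2)) \<le> 14 * m + 21 * 2 ^ m"
  by (induction m) auto

text \<open>The entries y < 2^k filled after j rounds of the inner loop for bit t.\<close>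

definition covered :: "nat \<Rightarrow> nat \<Rightarrow> nat \<Rightarrow> bool" where
  "covered t j y \<longleftrightarrow> 2 ^ Suc t dvd y \<or> (2 ^ t dvd y \<and> y < j * 2 ^ Suc t)"

lemma covered_Suc: "covered t (Suc j) y \<longleftrightarrow> covered t j y \<or> y = j * 2 ^ Suc t + 2 ^ t"
proof
  assume "covered t (Suc j) y"
  then show "covered t j y \<or> y = j * 2 ^ Suc t + 2 ^ t"
    using odd_multiple_of_power_less[of t y j] unfolding covered_def by blast
next
  assume "covered t j y \<or> y = j * 2 ^ Suc t + 2 ^ t"
  moreover have "j * 2 ^ Suc t \<le> Suc j * (2::nat) ^ Suc t" by simp
  moreover have "2 ^ t dvd j * 2 ^ Suc t + (2::nat) ^ t" by simp
  moreover have "j * 2 ^ Suc t + (2::nat) ^ t < Suc j * 2 ^ Suc t" by simp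
  ultimately show "covered t (Suc j) y" unfolding covered_def by auto
qed

locale qf_instance =
  fixes n w k h v d J \<gamma>
  assumes valid: "valid_desc n k h v d J \<gamma>" and word_size: "n + 3 \<le> w"
begin

definition "N = (2::nat) ^ n"
definition "K = (2::nat) ^ k"
definition "WW = (2::nat) ^ w"
abbreviation "par_base \<equiv> 4 + 2 * k"
abbreviation "point_base \<equiv> 4 + 2 * k + K"
abbreviation "phase_base \<equiv> 4 + 2 * k + 2 * K"
abbreviation "input \<equiv> input_mem n k h v d J"
abbreviation "zeros \<equiv> (\<lambda>a. if a < N then Some (0::complex) else None)"

lemma k_le_n: "k \<le> n"
  using valid by (simp add: valid_desc_def)

lemma independent: "\<forall>y < 2 ^ k. y \<noteq> 0 \<longrightarrow> span_comb v y k \<noteq> 0"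
  using valid by (simp add: valid_desc_def)

lemma upper_triangular: "\<forall>s<k. \<forall>u<k. bit (J s) u \<longrightarrow> s \<le> u"
  using valid by (simp add: valid_desc_def)

lemma J_less_K: "s < k \<Longrightarrow> J s < K"
  using valid by (auto simp: valid_desc_def K_def)

lemma K_le_N: "K \<le> N"
  using k_le_n by (simp add: K_def N_def)

lemma eight_N_le_WW: "8 * N \<le> WW"
proof -
  have "8 * N = 2 ^ (n + 3)" by (simp add: power_add N_def)
  also have "\<dots> \<le> 2 ^ w" using word_size by (simp add: power_increasing)
  finally show ?thesis by (simp add: WW_def)
qed

text \<open>Every address and value the program computes is below 7 2^n, so \<open>n + 3 \<le> w\<close>
  rules out wrap-around in the word arithmetic.\<close>

lemma word_bounds: "par_base + 3 * K < WW" "8 \<le> WW" "N < WW" "K \<le> N" "1 \<le> K" "1 \<le> N"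
proof -
  have "1 \<le> N" "1 \<le> K" by (simp_all add: N_def K_def)
  then show "8 \<le> WW" "N < WW" using eight_N_le_WW by linarith+
  show "1 \<le> N" "1 \<le> K" by fact+
  show "K \<le> N" by (rule K_le_N)
  have "par_base + 3 * K \<le> 7 * N" using double_add_4_le_4_power[of k] K_le_N by (simp add: K_def)
  then show "par_base + 3 * K < WW" using eight_N_le_WW \<open>1 \<le> N\<close> by linarith
qed

lemma power_fold: "(2::nat) ^ w = WW" "(2::nat) ^ n = N" "(2::nat) ^ k = K"
  by (simp_all add: WW_def N_def K_def)

lemma power_mod_word: "(2::nat) ^ n mod 2 ^ w = N" "(2::nat) ^ k mod 2 ^ w = K"
  using word_size k_le_n by (simp_all add: N_def K_def power_strict_increasing)

definition point :: "nat \<Rightarrow> nat" where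
  "point y = Bit_Operations.xor h (span_comb v y k)"

definition phase_exp :: "nat \<Rightarrow> nat" where
  "phase_exp y = phase_exponent k d J y mod 4"

lemma point_0: "point 0 = h"
  by (simp add: point_def)

lemma point_add_power: "t < k \<Longrightarrow> 2 ^ Suc t dvd y \<Longrightarrow>
    point (y + 2 ^ t) = Bit_Operations.xor (point y) (v t)"
proof -
  assume "t < k" "2 ^ Suc t dvd y"
  moreover from this have "\<not> bit y t" using bit_gt_of_power_dvd by blast
  ultimately show ?thesis unfolding point_def by (simp add: span_comb_add_power xor.assoc)
qed

lemma point_inj: "point a = point b \<Longrightarrow> a < K \<Longrightarrow> b < K \<Longrightarrow> a = b"
  unfolding point_def K_def by (metis xor_left_self_nat span_comb_inj[OF independent])

lemma point_less: "point y < N"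
  unfolding point_def N_def using valid
  by (intro xor_less_power span_comb_less_power) (auto simp: valid_desc_def)

lemma phase_exp_add_power:
  assumes "t < k" "2 ^ Suc t dvd y"
  shows "phase_exp (y + 2 ^ t) = (phase_exp y + (if bit d t then 1 else 0)
    + 2 * (popcount (Bit_Operations.and (J t) (y + 2 ^ t)) mod 2)) mod 4"
proof -
  have "phase_exponent k d J (y + 2 ^ t) = phase_exponent k d J y + (if bit d t then 1 else 0)
      + 2 * popcount (Bit_Operations.and (J t) (y + 2 ^ t))"
    using phase_exponent_add_power[OF upper_triangular _ assms] J_less_K[OF assms(1)]
    by (simp add: K_def)
  then show ?thesis
    unfolding phase_exp_def by (simp only: mod_4_add_double[of "phase_exponent k d J y"])
qed

definition fixed_regs :: "rstate \<Rightarrow> bool" where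
  "fixed_regs s \<longleftrightarrow> regs s 0 = 0 \<and> regs s 1 = 1 \<and> regs s 2 = n \<and> regs s 3 = k \<and> regs s 4 = N
     \<and> regs s 5 = K \<and> regs s 6 = par_base \<and> regs s 7 = point_base \<and> regs s 8 = phase_base
     \<and> regs s 9 = h \<and> regs s 10 = d \<and> regs s 11 = 3 \<and> regs s 12 = 4"

definition tables_hold :: "(nat \<Rightarrow> bool) \<Rightarrow> rstate \<Rightarrow> bool" where
  "tables_hold P s \<longleftrightarrow>
     (\<forall>y<K. P y \<longrightarrow> mem s (point_base + y) = point y \<and> mem s (phase_base + y) = phase_exp y)"

lemma tables_hold_extend:
  assumes "tables_hold P s" "y < K"
    and "mem s' = (mem s)(point_base + y := point y, phase_base + y := phase_exp y)"
  shows "tables_hold (\<lambda>z. P z \<or> z = y) s'"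
  using assms unfolding tables_hold_def by auto

lemmas exec_simps =
  prog_def numeral_2_eq_2[symmetric] run_numeral run_Suc step_eq
  fixed_regs_def power_mod_word power_fold

definition zero_fill_inv :: "nat \<Rightarrow> rstate \<Rightarrow> bool" where
  "zero_fill_inv x s \<longleftrightarrow> pc s = 16 \<and> fixed_regs s \<and> regs s 13 = x \<and> x \<le> N \<and> mem s = input
     \<and> out s = (\<lambda>a. if a < x then Some 0 else None)"

lemma init_reaches_zero_fill:
  "reaches_within prog w \<gamma> (init_state n k h v d J) (zero_fill_inv 0) 16"
proof (rule reaches_within_run[of _ _ _ _ 16])
  show "zero_fill_inv 0 (run prog w \<gamma> 16 (init_state n k h v d J))"
    using word_bounds by (simp add: exec_simps init_state_def zero_fill_inv_def input_mem_def)
qed simp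

lemma zero_fill_step:
  "zero_fill_inv x s \<Longrightarrow> x < N \<Longrightarrow> reaches_within prog w \<gamma> s (zero_fill_inv (Suc x)) 5"
proof (rule reaches_within_run[of _ _ _ _ 5])
  assume a: "zero_fill_inv x s" "x < N"
  let ?s = "run prog w \<gamma> 5 s"
  have "pc ?s = 16 \<and> fixed_regs ?s \<and> regs ?s 13 = Suc x \<and> mem ?s = mem s
      \<and> out ?s = (out s)(x := Some 0)"
    using a word_bounds unfolding zero_fill_inv_def by (simp add: exec_simps)
  then show "zero_fill_inv (Suc x) ?s"
    using a unfolding zero_fill_inv_def by (auto simp: fun_eq_iff)
qed simp

definition parity_inv :: "nat \<Rightarrow> rstate \<Rightarrow> bool" where
  "parity_inv z s \<longleftrightarrow> pc s = 22 \<and> fixed_regs s \<and> regs s 13 = z \<and> 1 \<le> z \<and> z \<le> K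
     \<and> (\<forall>a<par_base. mem s a = input a) \<and> (\<forall>y<z. mem s (par_base + y) = popcount y mod 2)
     \<and> out s = zeros"

lemma zero_fill_exit: "zero_fill_inv N s \<Longrightarrow> reaches_within prog w \<gamma> s (parity_inv 1) 3"
proof (rule reaches_within_run[of _ _ _ _ 3])
  assume a: "zero_fill_inv N s"
  let ?s = "run prog w \<gamma> 3 s"
  have "pc ?s = 22 \<and> fixed_regs ?s \<and> regs ?s 13 = 1 \<and> mem ?s = mem s \<and> out ?s = out s"
    using a word_bounds unfolding zero_fill_inv_def by (simp add: exec_simps)
  then show "parity_inv 1 ?s"
    using a word_bounds unfolding zero_fill_inv_def parity_inv_def by (auto simp: input_mem_def)
qed simp

lemma parity_step:
  "parity_inv z s \<Longrightarrow> z < K \<Longrightarrow> reaches_within prog w \<gamma> s (parity_inv (Suc z)) 11"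
proof (rule reaches_within_run[of _ _ _ _ 11])
  assume a: "parity_inv z s" "z < K"
  let ?s = "run prog w \<gamma> 11 s"
  have "mem s (par_base + z div 2) = popcount (z div 2) mod 2"
    using a unfolding parity_inv_def by auto
  then have "pc ?s = 22 \<and> fixed_regs ?s \<and> regs ?s 13 = Suc z
     \<and> mem ?s = (mem s)(par_base + z := Bit_Operations.xor (popcount (z div 2) mod 2) (z mod 2))
     \<and> out ?s = out s"
    using a word_bounds unfolding parity_inv_def by (simp add: exec_simps add_ac)
  then show "parity_inv (Suc z) ?s"
    using a unfolding parity_inv_def
    by (auto simp: popcount_parity_half[of z, symmetric] less_Suc_eq)
qed simp

definition parity_done :: "rstate \<Rightarrow> bool" where
  "parity_done s \<longleftrightarrow> fixed_regs s \<and> (\<forall>a<par_base. mem s a = input a)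
     \<and> (\<forall>y<K. mem s (par_base + y) = popcount y mod 2) \<and> out s = zeros"

definition outer_inv :: "nat \<Rightarrow> rstate \<Rightarrow> bool" where
  "outer_inv i s \<longleftrightarrow> pc s = 36 \<and> parity_done s \<and> i \<le> k \<and> regs s 13 = k - i
     \<and> tables_hold (\<lambda>y. 2 ^ (k - i) dvd y) s"

lemma parity_exit: "parity_inv K s \<Longrightarrow> reaches_within prog w \<gamma> s (outer_inv 0) 5"
proof (rule reaches_within_run[of _ _ _ _ 5])
  assume a: "parity_inv K s"
  let ?s = "run prog w \<gamma> 5 s"
  have st: "pc ?s = 36 \<and> fixed_regs ?s \<and> regs ?s 13 = k \<and> out ?s = out s
      \<and> mem ?s = (mem s)(point_base + 0 := point 0, phase_base + 0 := phase_exp 0)"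
    using a word_bounds unfolding parity_inv_def by (simp add: exec_simps point_0 phase_exp_def)
  have "tables_hold (\<lambda>z. False \<or> z = 0) ?s"
    using st word_bounds by (intro tables_hold_extend[of _ s]) (auto simp: tables_hold_def)
  moreover have "y < K \<Longrightarrow> 2 ^ k dvd y \<longleftrightarrow> y = 0" for y
    by (auto simp: K_def dest: dvd_imp_le)
  ultimately have "tables_hold (\<lambda>y. 2 ^ (k - 0) dvd y) ?s"
    unfolding tables_hold_def by simp
  then show "outer_inv 0 ?s"
    using a word_bounds st unfolding parity_inv_def outer_inv_def parity_done_def by simp
qed simp

definition inner_inv :: "nat \<Rightarrow> nat \<Rightarrow> nat \<Rightarrow> rstate \<Rightarrow> bool" where
  "inner_inv t m j s \<longleftrightarrow> pc s = 48 \<and> parity_done s \<and> t < k \<and> m * 2 ^ Suc t = K \<and> j \<le> m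
     \<and> regs s 13 = t \<and> regs s 14 = 2 ^ t \<and> regs s 15 = 2 ^ Suc t \<and> regs s 16 = v t
     \<and> regs s 17 = J t \<and> regs s 18 = (if bit d t then 1 else 0) \<and> regs s 19 = j * 2 ^ Suc t
     \<and> tables_hold (covered t j) s"

lemma inner_entry:
  "outer_inv i s \<Longrightarrow> i < k \<Longrightarrow> reaches_within prog w \<gamma> s (inner_inv (k - Suc i) (2 ^ i) 0) 12"
proof (rule reaches_within_run[of _ _ _ _ 12])
  assume a: "outer_inv i s" "i < k"
  define t where "t = k - Suc i"
  define p where "p = (2::nat) ^ t"
  have kt: "k - i = Suc t" "t < k" using a by (auto simp: t_def)
  have pK: "2 * p \<le> K" using kt by (simp add: p_def K_def power_increasing flip: power_Suc)
  have p2: "2 ^ t mod WW = p" using pK word_bounds by (simp add: p_def)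
  have mv: "mem s (t + 4) = v t" "mem s (t + 4 + k) = J t"
    using a kt unfolding outer_inv_def parity_done_def by (auto simp: input_mem_def)
  have db: "(d div 2 ^ t) mod 2 = (if bit d t then 1 else 0)"
    by (simp add: bit_iff_odd odd_iff_mod_2_eq_one)
  let ?s = "run prog w \<gamma> 12 s"
  have "pc ?s = 48 \<and> fixed_regs ?s \<and> regs ?s 13 = t \<and> regs ?s 14 = p \<and> regs ?s 15 = 2 * p
     \<and> regs ?s 16 = v t \<and> regs ?s 17 = J t \<and> regs ?s 18 = (if bit d t then 1 else 0)
     \<and> regs ?s 19 = 0 \<and> mem ?s = mem s \<and> out ?s = out s"
    using a word_bounds kt pK p2 mv db unfolding outer_inv_def parity_done_def by (simp add: exec_simps)
  moreover have "i + Suc t = k" using a by (simp add: t_def)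
  then have "(2::nat) ^ i * 2 ^ Suc t = 2 ^ k" by (metis power_add)
  moreover have "covered t 0 = (\<lambda>y. 2 ^ (k - i) dvd y)"
    using kt by (simp add: covered_def fun_eq_iff)
  ultimately show "inner_inv (k - Suc i) (2 ^ i) 0 ?s"
    using a kt unfolding outer_inv_def inner_inv_def parity_done_def tables_hold_def
    by (auto simp: t_def p_def K_def)
qed simp

lemma inner_step:
  "inner_inv t m j s \<Longrightarrow> j < m \<Longrightarrow> reaches_within prog w \<gamma> s (inner_inv t m (Suc j)) 21"
proof (rule reaches_within_run[of _ _ _ _ 21])
  assume a: "inner_inv t m j s" "j < m"
  define p where "p = (2::nat) ^ t"
  define y where "y = j * (2 * p)"
  define dt where "dt = (if bit d t then 1 else 0::nat)"
  define par where "par = popcount (Bit_Operations.and (J t) (y + p)) mod 2"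
  have tk: "t < k" and mK: "m * (2 * p) = K" using a unfolding inner_inv_def p_def by auto
  have "Suc j * (2 * p) \<le> m * (2 * p)" using a(2) by (intro mult_right_mono) auto
  then have yK: "y + 2 * p \<le> K" using mK by (simp add: y_def algebra_simps)
  have small: "1 \<le> p" "par \<le> 1" "dt \<le> 1" "phase_exp y < 4"
    by (auto simp: par_def dt_def phase_exp_def p_def)
  have dvd: "2 ^ Suc t dvd y" by (simp add: y_def p_def)
  have tabs: "tables_hold (covered t j) s" and pd: "parity_done s"
    using a unfolding inner_inv_def by auto
  have "y < K" using yK small(1) by linarith
  then have mem_y: "mem s (point_base + y) = point y" "mem s (phase_base + y) = phase_exp y"
    using tabs dvd unfolding tables_hold_def covered_def by blast+
  have and_K: "Bit_Operations.and (J t) (y + p) < K"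
    using J_less_K[OF tk] by (simp add: K_def and_less_power)
  then have mem_par: "mem s (par_base + Bit_Operations.and (J t) (y + p)) = par"
    using pd unfolding parity_done_def par_def by blast
  have r: "pc s = 48" "fixed_regs s" "regs s 13 = t" "regs s 14 = p" "regs s 15 = 2 * p"
    "regs s 16 = v t" "regs s 17 = J t" "regs s 18 = dt" "regs s 19 = y"
    using a pd unfolding inner_inv_def parity_done_def p_def y_def dt_def
    by (auto simp: algebra_simps)
  let ?s = "run prog w \<gamma> 21 s"
  have st: "pc ?s = 48 \<and> fixed_regs ?s \<and> regs ?s 13 = t \<and> regs ?s 14 = p \<and> regs ?s 15 = 2 * p
     \<and> regs ?s 16 = v t \<and> regs ?s 17 = J t \<and> regs ?s 18 = dt \<and> regs ?s 19 = y + 2 * p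
     \<and> mem ?s = (mem s)(point_base + (y + p) := Bit_Operations.xor (point y) (v t),
          phase_base + (y + p) := (phase_exp y + dt + (par + par)) mod 4)
     \<and> out ?s = out s"
    using r word_bounds yK mem_y mem_par and_K small by (simp add: exec_simps and_3_eq_mod_4 add_ac)
  moreover have "Bit_Operations.xor (point y) (v t) = point (y + p)"
    "(phase_exp y + dt + (par + par)) mod 4 = phase_exp (y + p)"
    using point_add_power[OF tk dvd] phase_exp_add_power[OF tk dvd]
    unfolding p_def dt_def par_def by (simp_all add: mult_2)
  ultimately have "mem ?s = (mem s)(point_base + (y + p) := point (y + p),
      phase_base + (y + p) := phase_exp (y + p))"
    by simp
  moreover have "y + p < K" using yK small(1) by linarith
  ultimately have "tables_hold (\<lambda>z. covered t j z \<or> z = y + p) ?s"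
    using tables_hold_extend[OF tabs] by blast
  then have "tables_hold (covered t (Suc j)) ?s"
    unfolding covered_Suc y_def p_def by (simp add: algebra_simps)
  moreover have "parity_done ?s" using pd st unfolding parity_done_def by auto
  moreover have "regs ?s 19 = Suc j * 2 ^ Suc t" using st by (simp add: y_def p_def algebra_simps)
  ultimately show "inner_inv t m (Suc j) ?s" using a st unfolding inner_inv_def p_def dt_def by auto
qed simp

lemma inner_exit:
  "inner_inv t m m s \<Longrightarrow> t = k - Suc i \<Longrightarrow> i < k \<Longrightarrow> reaches_within prog w \<gamma> s (outer_inv (Suc i)) 2"
proof (rule reaches_within_run[of _ _ _ _ 2])
  assume a: "inner_inv t m m s" "t = k - Suc i" "i < k"
  let ?s = "run prog w \<gamma> 2 s"
  have st: "pc ?s = 36 \<and> fixed_regs ?s \<and> regs ?s 13 = t \<and> mem ?s = mem s \<and> out ?s = out s"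
    using a word_bounds unfolding inner_inv_def parity_done_def by (simp add: exec_simps)
  have "tables_hold (\<lambda>y. 2 ^ t dvd y) s"
    using a unfolding inner_inv_def tables_hold_def covered_def by auto
  moreover have "parity_done s" using a unfolding inner_inv_def by blast
  ultimately show "outer_inv (Suc i) ?s"
    using st a unfolding outer_inv_def parity_done_def tables_hold_def by simp
qed simp

definition out_upto :: "nat \<Rightarrow> nat \<Rightarrow> complex option" where
  "out_upto y x = (if \<exists>y'<y. x = point y'
     then Some (\<gamma> * qf_phase k d J (THE y'. y' < K \<and> x = point y')) else zeros x)"

lemma out_upto_Suc:
  assumes "y < K"
  shows "out_upto (Suc y) = (out_upto y)(point y := Some (\<gamma> * qf_phase k d J y))"
proof
  fix x
  have "(THE y'. y' < K \<and> point y = point y') = y"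
    using assms point_inj by (intro the_equality) auto
  moreover have "x \<noteq> point y \<Longrightarrow> (\<exists>y'<Suc y. x = point y') \<longleftrightarrow> (\<exists>y'<y. x = point y')"
    using less_Suc_eq by auto
  ultimately show "out_upto (Suc y) x = ((out_upto y)(point y := Some (\<gamma> * qf_phase k d J y))) x"
    by (auto simp: out_upto_def)
qed

definition write_inv :: "nat \<Rightarrow> rstate \<Rightarrow> bool" where
  "write_inv y s \<longleftrightarrow> pc s = 70 \<and> fixed_regs s \<and> y \<le> K \<and> regs s 13 = y
     \<and> tables_hold (\<lambda>_. True) s \<and> out s = out_upto y"

lemma outer_exit: "outer_inv k s \<Longrightarrow> reaches_within prog w \<gamma> s (write_inv 0) 2"
proof (rule reaches_within_run[of _ _ _ _ 2])
  assume a: "outer_inv k s"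
  let ?s = "run prog w \<gamma> 2 s"
  have "pc ?s = 70 \<and> fixed_regs ?s \<and> regs ?s 13 = 0 \<and> mem ?s = mem s \<and> out ?s = out s"
    using a word_bounds unfolding outer_inv_def parity_done_def by (simp add: exec_simps)
  moreover have "out_upto 0 = zeros" by (simp add: out_upto_def fun_eq_iff)
  ultimately show "write_inv 0 ?s"
    using a unfolding outer_inv_def write_inv_def parity_done_def tables_hold_def by simp
qed simp

lemma write_step: "write_inv y s \<Longrightarrow> y < K \<Longrightarrow> reaches_within prog w \<gamma> s (write_inv (Suc y)) 9"
proof (rule reaches_within_run[of _ _ _ _ 9])
  assume a: "write_inv y s" "y < K"
  let ?s = "run prog w \<gamma> 9 s"
  have "mem s (point_base + y) = point y" "mem s (phase_base + y) = phase_exp y"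
    using a unfolding write_inv_def tables_hold_def by auto
  then have "pc ?s = 70 \<and> fixed_regs ?s \<and> regs ?s 13 = Suc y \<and> mem ?s = mem s
     \<and> out ?s = (out s)(point y := Some (\<gamma> * \<i> ^ (phase_exp y mod 4)))"
    using a word_bounds unfolding write_inv_def by (simp add: exec_simps add_ac)
  moreover have "\<i> ^ (phase_exp y mod 4) = qf_phase k d J y"
    by (simp add: phase_exp_def i_power_mod_4 qf_phase_eq_i_power)
  ultimately show "write_inv (Suc y) ?s"
    using a out_upto_Suc unfolding write_inv_def tables_hold_def by simp
qed simp

abbreviation final :: "rstate \<Rightarrow> bool" where
  "final s \<equiv> halted prog s \<and> output_is n (qf_state k h v d J \<gamma>) (out s)"

lemma write_exit: "write_inv K s \<Longrightarrow> reaches_within prog w \<gamma> s final 2"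
proof (rule reaches_within_run[of _ _ _ _ 2])
  assume a: "write_inv K s"
  let ?s = "run prog w \<gamma> 2 s"
  have "pc ?s = 79 \<and> out ?s = out_upto K"
    using a word_bounds unfolding write_inv_def by (simp add: exec_simps)
  moreover have "out_upto K x = (if x < 2 ^ n then Some (qf_state k h v d J \<gamma> x) else None)" for x
    using point_less
    unfolding out_upto_def qf_state_def point_def[symmetric] K_def[symmetric] N_def[symmetric]
    by auto
  ultimately show "final ?s" by (simp add: halted_def output_is_def)
qed simp

lemma reaches_parity:
  "reaches_within prog w \<gamma> (init_state n k h v d J) (parity_inv 1) (16 + (5 * N + 3))"
proof (rule reaches_within_trans[OF init_reaches_zero_fill])
  show "reaches_within prog w \<gamma> s (parity_inv 1) (5 * N + 3)" if "zero_fill_inv 0 s" for s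
    using reaches_within_loop_const[of zero_fill_inv N prog w \<gamma> 5 "parity_inv 1" 3]
      zero_fill_step zero_fill_exit that
    by blast
qed

lemma reaches_outer: "parity_inv 1 s \<Longrightarrow> reaches_within prog w \<gamma> s (outer_inv 0) (11 * (K - 1) + 5)"
  using reaches_within_loop[of parity_inv K prog w \<gamma> "\<lambda>_. 11" "outer_inv 0" 5 1 s]
    parity_step parity_exit word_bounds
  by (simp add: mult.commute)

lemma outer_step:
  "outer_inv i s \<Longrightarrow> i < k \<Longrightarrow> reaches_within prog w \<gamma> s (outer_inv (Suc i)) (12 + (21 * 2 ^ i + 2))"
  by (rule reaches_within_trans[OF inner_entry reaches_within_loop_const
        [of "inner_inv (k - Suc i) (2 ^ i)" "2 ^ i" prog w \<gamma> 21 "outer_inv (Suc i)" 2]])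
    (auto intro: inner_step inner_exit)

lemma reaches_write:
  "outer_inv 0 s \<Longrightarrow> reaches_within prog w \<gamma> s (write_inv 0) ((\<Sum>i<k. 12 + (21 * 2 ^ i + 2)) + 2)"
  using reaches_within_loop[of outer_inv k prog w \<gamma> "\<lambda>i. 12 + (21 * 2 ^ i + 2)" "write_inv 0" 2 0 s]
    outer_step outer_exit
  by (simp add: atLeast0LessThan)

lemma reaches_final: "write_inv 0 s \<Longrightarrow> reaches_within prog w \<gamma> s final (9 * K + 2)"
  using reaches_within_loop_const[of write_inv K prog w \<gamma> 9 final 2 s] write_step write_exit by simp

lemma prog_reaches_final: "reaches_within prog w \<gamma> (init_state n k h v d J) final (100 * 2 ^ n)"
proof -
  let ?b = "(16 + (5 * N + 3)) + ((11 * (K - 1) + 5)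
    + (((\<Sum>i<k. 12 + (21 * 2 ^ i + 2)) + 2) + (9 * K + 2)))"
  have "reaches_within prog w \<gamma> (init_state n k h v d J) final ?b"
    by (rule reaches_within_trans[OF reaches_parity reaches_within_trans[OF reaches_outer
          reaches_within_trans[OF reaches_write reaches_final]]])
  moreover have "k < K" unfolding K_def by (rule less_exp)
  then have "?b \<le> 100 * 2 ^ n"
    using outer_costs_le[of k] word_bounds unfolding N_def[symmetric] K_def[symmetric] by linarith
  ultimately show ?thesis by (rule reaches_within_mono)
qed

end

lemma prog_computes_qf_state:
  assumes "valid_desc n k h v d J \<gamma>" "n + 3 \<le> w"
  shows "\<exists>t \<le> 100 * 2 ^ n.
    halted prog (run prog w \<gamma> t (init_state n k h v d J)) \<and>
    output_is n (qf_state k h v d J \<gamma>) (out (run prog w \<gamma> t (init_state n k h v d J)))"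
proof -
  interpret qf_instance n w k h v d J \<gamma>
    using assms by unfold_locales
  show ?thesis
    using prog_reaches_final unfolding reaches_within_def by blast
qed

theorem corollary1:
  shows "(\<exists>(P :: instr list) (C :: nat). \<forall>n w k h v d J \<gamma>.
            valid_desc n k h v d J \<gamma> \<and> n + 3 \<le> w \<longrightarrow>
            (\<exists>t \<le> C * 2 ^ n.
               halted P (run P w \<gamma> t (init_state n k h v d J)) \<and>
               output_is n (qf_state k h v d J \<gamma>)
                 (out (run P w \<gamma> t (init_state n k h v d J)))))
       \<and> (\<forall>(P :: instr list) n w k h v d J \<gamma> t.
            valid_desc n k h v d J \<gamma> \<and>
            output_is n (qf_state k h v d J \<gamma>) (out (run P w \<gamma> t (init_state n k h v d J)))
            \<longrightarrow> 2 ^ n \<le> t)"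
  using prog_computes_qf_state output_time_lower_bound by blast

end
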